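(* Let $X$ be a Wright--Fisher diffusion on $\Delta_{d-1}=\{x\in[0,1]^d:\sum_i x_i=1\}$ with diffusion coefficient $V_{ij}(x)=x_i(\delta_{ij}-x_j)$ and drift $\mu(x;\varphi)=c(x)+Z(x)\varphi$, where $\varphi\in\mathbb R^r$, $Z(x)$ is a $d\times r$ matrix not depending on $\varphi$ with $a_i(x;\varphi)=\sum_{k=1}^r Z_{ik}(x)\varphi_k$, and $\sum_{i=1}^d c_i(x)=\sum_{i=1}^d Z_{ik}(x)=0$ for all $k$. Call the estimation of $\varphi$ robust to $c$ if the quantity $$\varphi^\top Z^*(x)^\top V^*(x)^{-1}c^*(x)$$ does not depend on $\varphi$, where $Z^*,c^*$ denote the first $d-1$ rows of $Z,c$ and $V^*(x)$ is the upper-left $(d-1)\times(d-1)$ block of $V(x)$ (so $[V^*(x)^{-1}]_{ij}=x_d^{-1}+x_i^{-1}\delta_{ij}$). Then the estimation is robust to $c$ if and only if $$\sum_{i=1}^d\frac{1}{x_i}\frac{\partial a_i}{\partial\varphi_k}(x)\,c_i(x)=0\qquad\text{for each }k=1,\dots,r.$$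
   Context: The estimator in question is $\hat\varphi=\big[\int_0^T Z(X(t))^\top\mathrm{diag}(X(t))^{-1}Z(X(t))\,dt\big]^{-1}Y$ with $Y_k=\int_0^T\sum_{i=1}^d\frac{Z_{ik}(X(t))}{X_i(t)}d\widetilde X_i(t)$ and $\widetilde X(t)=X(t)-\int_0^tc(X(s))ds$; the term $c$ represents a known (possibly confounding) drift contribution and robustness means, as defined in the claim, that $c$ does not enter the $\varphi$-dependent part of the likelihood via the cross term. *)

theory Defs
  imports "HOL-Analysis.Analysis" "Jordan_Normal_Form.Gauss_Jordan_Elimination"
begin

text \<open>Coordinates are 0-based: paper index i (1..d) is index i-1 here, so the
  last coordinate x_d is x (d-1).\<close>

text \<open>Open simplex: the points of the simplex with all coordinates positive
  (where 1/x_i and V* inverse make sense).\<close>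
definition open_simplex :: "nat \<Rightarrow> (nat \<Rightarrow> real) set" where
  "open_simplex d = {x. (\<forall>i<d. 0 < x i) \<and> (\<Sum>i<d. x i) = 1}"

definition WF_V :: "nat \<Rightarrow> (nat \<Rightarrow> real) \<Rightarrow> real mat" where
  "WF_V d x = mat d d (\<lambda>(i,j). x i * ((if i = j then 1 else 0) - x j))"

definition WF_Vstar :: "nat \<Rightarrow> (nat \<Rightarrow> real) \<Rightarrow> real mat" where
  "WF_Vstar d x = mat (d - 1) (d - 1) (\<lambda>(i,j). WF_V d x $$ (i,j))"

definition Zstar :: "nat \<Rightarrow> nat \<Rightarrow> (nat \<Rightarrow> nat \<Rightarrow> real) \<Rightarrow> real mat" where
  "Zstar d r Zx = mat (d - 1) r (\<lambda>(i,k). Zx i k)"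

definition cstar :: "nat \<Rightarrow> (nat \<Rightarrow> real) \<Rightarrow> real vec" where
  "cstar d cx = vec (d - 1) cx"

definition robust_quantity ::
  "nat \<Rightarrow> nat \<Rightarrow> (nat \<Rightarrow> real) \<Rightarrow> (nat \<Rightarrow> nat \<Rightarrow> real) \<Rightarrow> (nat \<Rightarrow> real) \<Rightarrow> real vec \<Rightarrow> real" where
  "robust_quantity d r x Zx cx \<phi> =
     \<phi> \<bullet> ((transpose_mat (Zstar d r Zx) * the (mat_inverse (WF_Vstar d x))) *\<^sub>v cstar d cx)"

definition robust_to_c ::
  "nat \<Rightarrow> nat \<Rightarrow> ((nat \<Rightarrow> real) \<Rightarrow> nat \<Rightarrow> nat \<Rightarrow> real) \<Rightarrow> ((nat \<Rightarrow> real) \<Rightarrow> nat \<Rightarrow> real) \<Rightarrow> bool" where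
  "robust_to_c d r Z c \<longleftrightarrow>
     (\<forall>x \<in> open_simplex d. \<forall>\<phi> \<in> carrier_vec r. \<forall>\<psi> \<in> carrier_vec r.
        robust_quantity d r x (Z x) (c x) \<phi> = robust_quantity d r x (Z x) (c x) \<psi>)"

definition WF_a :: "nat \<Rightarrow> (nat \<Rightarrow> nat \<Rightarrow> real) \<Rightarrow> real vec \<Rightarrow> nat \<Rightarrow> real" where
  "WF_a r Zx \<phi> i = (\<Sum>k<r. Zx i k * \<phi> $ k)"

definition partial_a :: "nat \<Rightarrow> (nat \<Rightarrow> nat \<Rightarrow> real) \<Rightarrow> real vec \<Rightarrow> nat \<Rightarrow> nat \<Rightarrow> real" where
  "partial_a r Zx \<phi> i k =
     deriv (\<lambda>t. WF_a r Zx (vec r (\<lambda>j. if j = k then t else \<phi> $ j)) i) (\<phi> $ k)"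

end

theory Submission
  imports Defs "Jordan_Normal_Form.Determinant"
begin

text \<open>The block V*(x) has the explicit inverse (1/x_d) 1 1^T + diag(1/x_1, ..., 1/x_{d-1}).
  Since the c_i sum to zero, V*(x)^{-1} c*(x) has entries c_i/x_i - c_d/x_d, and since each
  column of Z sums to zero, applying Z*(x)^T restores the missing d-th summand: the quantity is
  phi \<bullet> w(x) with w_k(x) = sum_i Z_ik(x) c_i(x) / x_i. A linear form in phi is independent of
  phi iff its coefficient vector vanishes, and w_k(x) is exactly the sum in the criterion because
  the partial derivative of a_i with respect to phi_k is Z_ik(x).\<close>

lemma sum_lessThan_pred:
  fixes f :: "nat \<Rightarrow> 'a :: ab_group_add"
  assumes "1 \<le> d"
  shows "(\<Sum>i<d - 1. f i) = (\<Sum>i<d. f i) - f (d - 1)"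
proof -
  from assms have "d = Suc (d - 1)" by simp
  then have "(\<Sum>i<d. f i) = (\<Sum>i<d - 1. f i) + f (d - 1)"
    by (metis sum.lessThan_Suc)
  then show ?thesis by simp
qed

lemma partial_a_eq:
  assumes "k < r"
  shows "partial_a r Zx \<phi> i k = Zx i k"
proof -
  have "((\<lambda>t. \<Sum>j<r. Zx i j * (if j = k then t else \<phi> $ j)) has_real_derivative
        (\<Sum>j<r. Zx i j * (if j = k then 1 else 0))) (at (\<phi> $ k))"
    by (intro DERIV_sum) (auto intro!: derivative_eq_intros)
  moreover have "(\<Sum>j<r. Zx i j * (if j = k then 1 else 0)) = Zx i k"
    using assms by (simp add: if_distrib cong: if_cong)
  ultimately show ?thesis
    unfolding partial_a_def WF_a_def by (simp add: DERIV_imp_deriv cong: if_cong)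
qed

lemma mat_inverse_eq_right_inverse:
  fixes A B :: "'a :: field mat"
  assumes A: "A \<in> carrier_mat n n" and B: "B \<in> carrier_mat n n" and AB: "A * B = 1\<^sub>m n"
  shows "mat_inverse A = Some B"
proof -
  have BA: "B * A = 1\<^sub>m n" by (rule mat_mult_left_right_inverse[OF A B AB])
  have "A \<in> Units (ring_mat TYPE('a) n undefined)"
    unfolding Units_def using A B AB BA by (auto simp: ring_mat_simps)
  then obtain C where C: "mat_inverse A = Some C"
    using mat_inverse(1)[OF A] by fastforce
  with mat_inverse(2)[OF A] have AC: "A * C = 1\<^sub>m n" and C_carrier: "C \<in> carrier_mat n n"
    by auto
  have "B = B * (A * C)" using B by (simp add: AC)
  also have "\<dots> = (B * A) * C" using assoc_mult_mat[OF B A C_carrier] by simp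
  also have "\<dots> = C" using BA C_carrier by simp
  finally show ?thesis using C by simp
qed

definition WF_Vstar_inv :: "nat \<Rightarrow> (nat \<Rightarrow> real) \<Rightarrow> real mat" where
  "WF_Vstar_inv d x =
     mat (d - 1) (d - 1) (\<lambda>(i,j). 1 / x (d - 1) + (if i = j then 1 / x i else 0))"

lemma WF_Vstar_mult_inv:
  assumes x: "x \<in> open_simplex d" and d: "1 \<le> d"
  shows "WF_Vstar d x * WF_Vstar_inv d x = 1\<^sub>m (d - 1)"
proof (rule eq_matI)
  let ?n = "d - 1"
  fix i j assume "i < dim_row (1\<^sub>m ?n :: real mat)" "j < dim_col (1\<^sub>m ?n :: real mat)"
  then have ij: "i < ?n" "j < ?n" by auto
  have pos: "\<And>l. l < d \<Longrightarrow> 0 < x l" and sum_x: "(\<Sum>l<d. x l) = 1"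
    using x by (auto simp: open_simplex_def)
  have xn: "x ?n \<noteq> 0" using pos[of ?n] d by simp
  have sum_x_pred: "(\<Sum>l<?n. x l) = 1 - x ?n"
    using sum_lessThan_pred[OF d, of x] sum_x by simp
  have "(WF_Vstar d x * WF_Vstar_inv d x) $$ (i,j) =
     (\<Sum>l<?n. x i * ((if i = l then 1 else 0) - x l) * (1 / x ?n + (if l = j then 1 / x l else 0)))"
    using ij by (simp add: WF_Vstar_def WF_V_def WF_Vstar_inv_def scalar_prod_def atLeast0LessThan)
  also have "\<dots> = (\<Sum>l<?n. (if l = i then x i / x ?n + (if i = j then 1 else 0) else 0)
                            - x i / x ?n * x l - (if l = j then x i else 0))"
  proof (intro sum.cong refl)
    fix l assume "l \<in> {..<?n}"
    then have "x l \<noteq> 0" using pos[of l] by fastforce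
    then show "x i * ((if i = l then 1 else 0) - x l) * (1 / x ?n + (if l = j then 1 / x l else 0)) =
      (if l = i then x i / x ?n + (if i = j then 1 else 0) else 0) - x i / x ?n * x l
        - (if l = j then x i else 0)"
      using xn by (cases "l = i"; cases "l = j") (simp_all add: field_simps)
  qed
  also have "\<dots> = x i / x ?n + (if i = j then 1 else 0) - x i / x ?n * (1 - x ?n) - x i"
    using ij by (simp add: sum_subtractf sum_divide_distrib[symmetric] sum_distrib_left[symmetric]
        sum_x_pred[simplified])
  also have "\<dots> = 1\<^sub>m ?n $$ (i,j)"
    using ij xn by (simp add: diff_divide_distrib right_diff_distrib)
  finally show "(WF_Vstar d x * WF_Vstar_inv d x) $$ (i,j) = 1\<^sub>m ?n $$ (i,j)" .
qed (auto simp: WF_Vstar_def WF_Vstar_inv_def)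

lemma mat_inverse_WF_Vstar:
  assumes "x \<in> open_simplex d" and "1 \<le> d"
  shows "mat_inverse (WF_Vstar d x) = Some (WF_Vstar_inv d x)"
  by (rule mat_inverse_eq_right_inverse[OF _ _ WF_Vstar_mult_inv[OF assms]])
    (simp_all add: WF_Vstar_def WF_Vstar_inv_def)

lemma WF_Vstar_inv_mult_cstar:
  assumes d: "1 \<le> d" and c_sum: "(\<Sum>i<d. cx i) = 0"
  shows "WF_Vstar_inv d x *\<^sub>v cstar d cx = vec (d - 1) (\<lambda>i. cx i / x i - cx (d - 1) / x (d - 1))"
proof (rule eq_vecI)
  let ?n = "d - 1"
  fix i assume "i < dim_vec (vec ?n (\<lambda>i. cx i / x i - cx ?n / x ?n))"
  then have i: "i < ?n" by simp
  have "(WF_Vstar_inv d x *\<^sub>v cstar d cx) $ i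
      = (\<Sum>j<?n. cx j / x ?n + (if j = i then cx i / x i else 0))"
    using i by (auto simp: WF_Vstar_inv_def cstar_def scalar_prod_def atLeast0LessThan
        algebra_simps intro!: sum.cong)
  also have "\<dots> = (\<Sum>j<?n. cx j) / x ?n + cx i / x i"
    using i by (simp add: sum.distrib sum_divide_distrib)
  also have "\<dots> = cx i / x i - cx ?n / x ?n"
    using sum_lessThan_pred[OF d, of cx] c_sum by simp
  finally show "(WF_Vstar_inv d x *\<^sub>v cstar d cx) $ i = vec ?n (\<lambda>i. cx i / x i - cx ?n / x ?n) $ i"
    using i by simp
qed (simp add: WF_Vstar_inv_def)

lemma robust_quantity_eq_scalar_prod:
  assumes x: "x \<in> open_simplex d" and d: "1 \<le> d"
    and c_sum: "(\<Sum>i<d. cx i) = 0"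
    and Z_sum: "\<And>k. k < r \<Longrightarrow> (\<Sum>i<d. Zx i k) = 0"
  shows "robust_quantity d r x Zx cx \<phi> = \<phi> \<bullet> vec r (\<lambda>k. \<Sum>i<d. Zx i k * cx i / x i)"
proof -
  let ?n = "d - 1"
  have "(transpose_mat (Zstar d r Zx) * WF_Vstar_inv d x) *\<^sub>v cstar d cx
      = transpose_mat (Zstar d r Zx) *\<^sub>v (WF_Vstar_inv d x *\<^sub>v cstar d cx)"
    by (rule assoc_mult_mat_vec[of _ r ?n _ ?n]) (auto simp: Zstar_def WF_Vstar_inv_def cstar_def)
  also have "\<dots> = vec r (\<lambda>k. \<Sum>i<d. Zx i k * cx i / x i)"
  proof (rule eq_vecI)
    fix k assume "k < dim_vec (vec r (\<lambda>k. \<Sum>i<d. Zx i k * cx i / x i))"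
    then have k: "k < r" by simp
    have "(transpose_mat (Zstar d r Zx) *\<^sub>v (WF_Vstar_inv d x *\<^sub>v cstar d cx)) $ k
        = (\<Sum>i<?n. Zx i k * (cx i / x i - cx ?n / x ?n))"
      using k by (simp add: WF_Vstar_inv_mult_cstar[OF d c_sum] Zstar_def scalar_prod_def
          atLeast0LessThan)
    also have "\<dots> = (\<Sum>i<?n. Zx i k * cx i / x i) - (\<Sum>i<?n. Zx i k) * cx ?n / x ?n"
      by (simp add: right_diff_distrib sum_subtractf sum_distrib_right sum_divide_distrib)
    also have "\<dots> = (\<Sum>i<d. Zx i k * cx i / x i)"
      using sum_lessThan_pred[OF d, of "\<lambda>i. Zx i k"] Z_sum[OF k]
        sum_lessThan_pred[OF d, of "\<lambda>i. Zx i k * cx i / x i"] by simp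
    finally show "(transpose_mat (Zstar d r Zx) *\<^sub>v (WF_Vstar_inv d x *\<^sub>v cstar d cx)) $ k
        = vec r (\<lambda>k. \<Sum>i<d. Zx i k * cx i / x i) $ k"
      using k by simp
  qed (simp add: Zstar_def)
  finally show ?thesis
    unfolding robust_quantity_def mat_inverse_WF_Vstar[OF x d] by simp
qed

lemma scalar_prod_independent_iff:
  fixes w :: "'a :: comm_ring_1 vec"
  assumes w: "w \<in> carrier_vec n"
  shows "(\<forall>\<phi> \<in> carrier_vec n. \<forall>\<psi> \<in> carrier_vec n. \<phi> \<bullet> w = \<psi> \<bullet> w) \<longleftrightarrow> (\<forall>k<n. w $ k = 0)"
proof
  assume independent: "\<forall>\<phi> \<in> carrier_vec n. \<forall>\<psi> \<in> carrier_vec n. \<phi> \<bullet> w = \<psi> \<bullet> w"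
  show "\<forall>k<n. w $ k = 0"
  proof (intro allI impI)
    fix k assume "k < n"
    then have "w $ k = unit_vec n k \<bullet> w" using w by simp
    also have "\<dots> = 0\<^sub>v n \<bullet> w" using independent by simp
    also have "\<dots> = 0" using w by simp
    finally show "w $ k = 0" .
  qed
next
  assume "\<forall>k<n. w $ k = 0"
  then have "w = 0\<^sub>v n" using w by (intro eq_vecI) auto
  then show "\<forall>\<phi> \<in> carrier_vec n. \<forall>\<psi> \<in> carrier_vec n. \<phi> \<bullet> w = \<psi> \<bullet> w" by simp
qed

theorem proposition2:
  fixes d r :: nat
    and Z :: "(nat \<Rightarrow> real) \<Rightarrow> nat \<Rightarrow> nat \<Rightarrow> real"
    and c :: "(nat \<Rightarrow> real) \<Rightarrow> nat \<Rightarrow> real"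
  assumes d_pos: "1 \<le> d"
    and c_sum: "\<And>x. x \<in> open_simplex d \<Longrightarrow> (\<Sum>i<d. c x i) = 0"
    and Z_sum: "\<And>x k. x \<in> open_simplex d \<Longrightarrow> k < r \<Longrightarrow> (\<Sum>i<d. Z x i k) = 0"
  shows "robust_to_c d r Z c \<longleftrightarrow>
    (\<forall>x \<in> open_simplex d. \<forall>\<phi> \<in> carrier_vec r. \<forall>k<r.
       (\<Sum>i<d. (1 / x i) * partial_a r (Z x) \<phi> i k * c x i) = 0)"
proof -
  define w where "w x = vec r (\<lambda>k. \<Sum>i<d. Z x i k * c x i / x i)" for x
  have "robust_to_c d r Z c \<longleftrightarrow> (\<forall>x \<in> open_simplex d. \<forall>k<r. w x $ k = 0)"
    unfolding robust_to_c_def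
    using robust_quantity_eq_scalar_prod[OF _ d_pos c_sum Z_sum]
      scalar_prod_independent_iff[of "w _" r]
    by (simp add: w_def)
  moreover have "(\<Sum>i<d. (1 / x i) * partial_a r (Z x) \<phi> i k * c x i) = w x $ k"
    if "k < r" for x \<phi> k
    using that by (simp add: partial_a_eq w_def)
  ultimately show ?thesis by (auto intro: zero_carrier_vec)
qed

end
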